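(* In the linear deterministic diamond network with a disturbing node with gains $n_1,n_2,n_3,n_4,m$, suppose $n_1=n_2$ and $m\ge n_1$. Then $R(G_A,G_B)=0$ for every choice of $G_A,G_B$; in particular the linear capacity is $C=0$.
   Context: The shift matrix $Q$ is the $q\times q$ matrix over $\mathbb{F}_2$ with $Q_{i+1,i}=1$ for $1\le i\le q-1$ and all other entries $0$, where $q=\max(n_1,n_2,n_3,n_4,m)$ and all gains are nonnegative integers. Network: source $S$, relays $A,B$, destination $D$, disturbing node $M$; gains $n_1$ ($S\to A$), $n_2$ ($S\to B$), $n_3$ ($A\to D$), $n_4$ ($B\to D$), $m$ ($M\to A$ and $M\to B$). Each node transmits $x_i\in\mathbb{F}_2^q$ and receives $y_j=\sum_{k:(k,j)\text{ an edge}}Q^{q-n_{(k,j)}}x_k$; relays use linear maps $x_A=G_Ay_A$, $x_B=G_By_B$ with $G_A,G_B$ arbitrary $q\times q$ matrices over $\mathbb{F}_2$. Then $y_D=G_Sx_S+G_Mx_M$ with $G_S=Q^{q-n_3}G_AQ^{q-n_1}+Q^{q-n_4}G_BQ^{q-n_2}$ and $G_M=Q^{q-n_3}G_AQ^{q-m}+Q^{q-n_4}G_BQ^{q-m}$. The rate $R(G_A,G_B)$ is the maximum dimension of a subspace $\mathcal{X}\subseteq\mathbb{F}_2^q$ such that for all $x_S,x_S'\in\mathcal{X}$, $x_M,x_M'\in\mathbb{F}_2^q$, $G_Sx_S+G_Mx_M=G_Sx_S'+G_Mx_M'$ implies $x_S=x_S'$. The linear capacity is $C=\max_{G_A,G_B}R(G_A,G_B)$.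 *)

theory Defs
  imports "Jordan_Normal_Form.VS_Connect" "HOL-Library.Z2"
begin

definition qdim :: "nat \<Rightarrow> nat \<Rightarrow> nat \<Rightarrow> nat \<Rightarrow> nat \<Rightarrow> nat" where
  "qdim n1 n2 n3 n4 m = Max {n1, n2, n3, n4, m}"

text \<open>Shift matrix: Q_{i+1,i} = 1 (1-based), i.e. entry (i+1,i) = 1 (0-based).\<close>
definition shiftQ :: "nat \<Rightarrow> bit mat" where
  "shiftQ q = mat q q (\<lambda>(i, j). if i = Suc j then 1 else 0)"

definition chanS :: "nat \<Rightarrow> nat \<Rightarrow> nat \<Rightarrow> nat \<Rightarrow> nat \<Rightarrow> bit mat \<Rightarrow> bit mat \<Rightarrow> bit mat" where
  "chanS n1 n2 n3 n4 m GA GB =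
     (let q = qdim n1 n2 n3 n4 m; Q = shiftQ q in
       Q ^\<^sub>m (q - n3) * GA * Q ^\<^sub>m (q - n1) + Q ^\<^sub>m (q - n4) * GB * Q ^\<^sub>m (q - n2))"

definition chanM :: "nat \<Rightarrow> nat \<Rightarrow> nat \<Rightarrow> nat \<Rightarrow> nat \<Rightarrow> bit mat \<Rightarrow> bit mat \<Rightarrow> bit mat" where
  "chanM n1 n2 n3 n4 m GA GB =
     (let q = qdim n1 n2 n3 n4 m; Q = shiftQ q in
       Q ^\<^sub>m (q - n3) * GA * Q ^\<^sub>m (q - m) + Q ^\<^sub>m (q - n4) * GB * Q ^\<^sub>m (q - m))"

text \<open>A subspace X of GF(2)^q is admissible if the source symbol from X is
  uniquely decodable at D whatever the disturbing node sends.\<close>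
definition admissible :: "nat \<Rightarrow> nat \<Rightarrow> nat \<Rightarrow> nat \<Rightarrow> nat \<Rightarrow> bit mat \<Rightarrow> bit mat \<Rightarrow> bit vec set \<Rightarrow> bool" where
  "admissible n1 n2 n3 n4 m GA GB X \<longleftrightarrow>
     (let q = qdim n1 n2 n3 n4 m; GS = chanS n1 n2 n3 n4 m GA GB; GM = chanM n1 n2 n3 n4 m GA GB in
       VectorSpace.subspace class_ring X (module_vec TYPE(bit) q) \<and>
       (\<forall>xS\<in>X. \<forall>xS'\<in>X. \<forall>xM\<in>carrier_vec q. \<forall>xM'\<in>carrier_vec q.
          GS *\<^sub>v xS + GM *\<^sub>v xM = GS *\<^sub>v xS' + GM *\<^sub>v xM' \<longrightarrow> xS = xS'))"

definition rate :: "nat \<Rightarrow> nat \<Rightarrow> nat \<Rightarrow> nat \<Rightarrow> nat \<Rightarrow> bit mat \<Rightarrow> bit mat \<Rightarrow> nat" where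
  "rate n1 n2 n3 n4 m GA GB =
     Max {vectorspace.dim class_ring ((module_vec TYPE(bit) (qdim n1 n2 n3 n4 m))\<lparr>carrier := X\<rparr>)
          | X. admissible n1 n2 n3 n4 m GA GB X}"

definition linear_capacity :: "nat \<Rightarrow> nat \<Rightarrow> nat \<Rightarrow> nat \<Rightarrow> nat \<Rightarrow> nat" where
  "linear_capacity n1 n2 n3 n4 m =
     Max {rate n1 n2 n3 n4 m GA GB | GA GB.
            GA \<in> carrier_mat (qdim n1 n2 n3 n4 m) (qdim n1 n2 n3 n4 m) \<and>
            GB \<in> carrier_mat (qdim n1 n2 n3 n4 m) (qdim n1 n2 n3 n4 m)}"

end

theory Submission
  imports Defs "Jordan_Normal_Form.DL_Rank"
begin

text \<open>When n1 = n2 \<le> m, the source reaches D only through a further shift of what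
  M can inject: G_S = G_M Q^(m-n1). The disturbing node can therefore send Q^(m-n1) x and
  make the source symbol x indistinguishable from 0, so only the zero subspace is
  decodable, whatever the relays do.\<close>

lemma pow_mat_add:
  fixes A :: "'a::semiring_1 mat"
  assumes "A \<in> carrier_mat n n"
  shows "A ^\<^sub>m (i + j) = A ^\<^sub>m i * A ^\<^sub>m j"
proof (induction j)
  case (Suc j)
  have "A ^\<^sub>m (i + Suc j) = (A ^\<^sub>m i * A ^\<^sub>m j) * A" using Suc by simp
  also have "\<dots> = A ^\<^sub>m i * (A ^\<^sub>m j * A)"
    using assms by (intro assoc_mult_mat) auto
  finally show ?case by simp
qed (use assms in simp)

lemma shiftQ_carrier_mat [simp]: "shiftQ q \<in> carrier_mat q q"
  unfolding shiftQ_def by simp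

lemma chanS_eq_chanM_mult_shift:
  assumes "n1 = n2" and "n1 \<le> m"
    and GA: "GA \<in> carrier_mat (qdim n1 n2 n3 n4 m) (qdim n1 n2 n3 n4 m)"
    and GB: "GB \<in> carrier_mat (qdim n1 n2 n3 n4 m) (qdim n1 n2 n3 n4 m)"
  shows "chanS n1 n2 n3 n4 m GA GB =
         chanM n1 n2 n3 n4 m GA GB * shiftQ (qdim n1 n2 n3 n4 m) ^\<^sub>m (m - n1)"
proof -
  define q where "q = qdim n1 n2 n3 n4 m"
  define Q where "Q = shiftQ q"
  define A where "A = Q ^\<^sub>m (q - n3) * GA"
  define B where "B = Q ^\<^sub>m (q - n4) * GB"
  define R where "R = Q ^\<^sub>m (q - m)"
  define T where "T = Q ^\<^sub>m (m - n1)"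
  have Q: "Q \<in> carrier_mat q q" unfolding Q_def by simp
  have carr: "A \<in> carrier_mat q q" "B \<in> carrier_mat q q" "R \<in> carrier_mat q q" "T \<in> carrier_mat q q"
    using Q GA GB unfolding A_def B_def R_def T_def q_def by auto
  have "m \<le> q" unfolding q_def qdim_def by simp
  with \<open>n1 \<le> m\<close> have "Q ^\<^sub>m (q - n1) = R * T"
    unfolding R_def T_def using pow_mat_add[OF Q, of "q - m" "m - n1"] by simp
  have "chanS n1 n2 n3 n4 m GA GB = A * Q ^\<^sub>m (q - n1) + B * Q ^\<^sub>m (q - n2)"
    unfolding chanS_def Let_def q_def[symmetric] Q_def[symmetric] A_def B_def ..
  also have "\<dots> = A * (R * T) + B * (R * T)"
    using \<open>Q ^\<^sub>m (q - n1) = R * T\<close> \<open>n1 = n2\<close> by simp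
  also have "\<dots> = (A * R + B * R) * T"
    using carr by (simp add: add_mult_distrib_mat[of "A * R" q q "B * R" T q])
  also have "A * R + B * R = chanM n1 n2 n3 n4 m GA GB"
    unfolding chanM_def Let_def q_def[symmetric] Q_def[symmetric] A_def B_def R_def ..
  finally show ?thesis unfolding T_def Q_def q_def .
qed

lemma decodable_factor_trivial:
  fixes GS GM T :: "'a::semiring_1 mat"
  assumes factor: "GS = GM * T"
    and carr: "GM \<in> carrier_mat q q" "T \<in> carrier_mat q q"
    and decodable: "\<forall>xS\<in>X. \<forall>xS'\<in>X. \<forall>xM\<in>carrier_vec q. \<forall>xM'\<in>carrier_vec q.
                      GS *\<^sub>v xS + GM *\<^sub>v xM = GS *\<^sub>v xS' + GM *\<^sub>v xM' \<longrightarrow> xS = xS'"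
    and "0\<^sub>v q \<in> X" "x \<in> X" "x \<in> carrier_vec q"
  shows "x = 0\<^sub>v q"
proof -
  have "GS *\<^sub>v x = GM *\<^sub>v (T *\<^sub>v x)"
    using carr \<open>x \<in> carrier_vec q\<close> by (simp add: factor)
  moreover have "T *\<^sub>v 0\<^sub>v q = 0\<^sub>v q" "GM *\<^sub>v 0\<^sub>v q = 0\<^sub>v q"
    using carr by auto
  moreover have "GS *\<^sub>v 0\<^sub>v q = 0\<^sub>v q"
    using carr calculation(2,3) by (simp add: factor)
  ultimately have "GS *\<^sub>v x + GM *\<^sub>v 0\<^sub>v q = GS *\<^sub>v 0\<^sub>v q + GM *\<^sub>v (T *\<^sub>v x)"
    using carr \<open>x \<in> carrier_vec q\<close> by simp
  with decodable \<open>0\<^sub>v q \<in> X\<close> \<open>x \<in> X\<close> carr \<open>x \<in> carrier_vec q\<close> show ?thesis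
    by (meson mult_mat_vec_carrier zero_carrier_vec)
qed

lemma admissible_imp_zero_space:
  assumes "n1 = n2" and "n1 \<le> m"
    and GA: "GA \<in> carrier_mat (qdim n1 n2 n3 n4 m) (qdim n1 n2 n3 n4 m)"
    and GB: "GB \<in> carrier_mat (qdim n1 n2 n3 n4 m) (qdim n1 n2 n3 n4 m)"
    and "admissible n1 n2 n3 n4 m GA GB X"
  shows "X = {0\<^sub>v (qdim n1 n2 n3 n4 m)}"
proof -
  define q where "q = qdim n1 n2 n3 n4 m"
  have sub: "submodule class_ring X (module_vec TYPE(bit) q)"
    and decodable: "\<forall>xS\<in>X. \<forall>xS'\<in>X. \<forall>xM\<in>carrier_vec q. \<forall>xM'\<in>carrier_vec q.
       chanS n1 n2 n3 n4 m GA GB *\<^sub>v xS + chanM n1 n2 n3 n4 m GA GB *\<^sub>v xM =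
       chanS n1 n2 n3 n4 m GA GB *\<^sub>v xS' + chanM n1 n2 n3 n4 m GA GB *\<^sub>v xM' \<longrightarrow> xS = xS'"
    using \<open>admissible n1 n2 n3 n4 m GA GB X\<close>
    unfolding admissible_def Let_def q_def VectorSpace.subspace_def by auto
  have X: "X \<subseteq> carrier_vec q" "0\<^sub>v q \<in> X"
    using submodule.subset[OF sub] submodule.zero_closed[OF sub] by (auto simp: module_vec_def)
  have GM: "chanM n1 n2 n3 n4 m GA GB \<in> carrier_mat q q"
    using GA GB unfolding chanM_def Let_def q_def
    by (meson add_carrier_mat mult_carrier_mat pow_carrier_mat shiftQ_carrier_mat)
  have "x = 0\<^sub>v q" if "x \<in> X" for x
    using decodable_factor_trivial[OF chanS_eq_chanM_mult_shift[OF assms(1-4)] GM[unfolded q_def]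
        pow_carrier_mat[OF shiftQ_carrier_mat] decodable[unfolded q_def]] X that
    unfolding q_def by blast
  with X show ?thesis unfolding q_def by blast
qed

lemma admissible_zero_space:
  "admissible n1 n2 n3 n4 m GA GB {0\<^sub>v (qdim n1 n2 n3 n4 m)}"
proof -
  interpret vec_space "TYPE(bit)" "qdim n1 n2 n3 n4 m" .
  have "span {} = {0\<^sub>v (qdim n1 n2 n3 n4 m)}" using span_empty by simp
  moreover have "VectorSpace.subspace class_ring (span {}) V" by (rule span_is_subspace) simp
  ultimately show ?thesis unfolding admissible_def Let_def by simp
qed

lemma dim_zero_space: "vectorspace.dim class_ring ((module_vec TYPE(bit) q)\<lparr>carrier := {0\<^sub>v q}\<rparr>) = 0"
proof -
  interpret vec_space "TYPE(bit)" q .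
  show ?thesis using dim_zero_vs span_empty by simp
qed

lemma rate_eq_0:
  assumes "n1 = n2" and "n1 \<le> m"
    and "GA \<in> carrier_mat (qdim n1 n2 n3 n4 m) (qdim n1 n2 n3 n4 m)"
    and "GB \<in> carrier_mat (qdim n1 n2 n3 n4 m) (qdim n1 n2 n3 n4 m)"
  shows "rate n1 n2 n3 n4 m GA GB = 0"
proof -
  have "{vectorspace.dim class_ring ((module_vec TYPE(bit) (qdim n1 n2 n3 n4 m))\<lparr>carrier := X\<rparr>)
          | X. admissible n1 n2 n3 n4 m GA GB X} = {0}"
    using admissible_imp_zero_space[OF assms] admissible_zero_space dim_zero_space by fastforce
  then show ?thesis unfolding rate_def by simp
qed

theorem mainTheorem8:
  fixes n1 n2 n3 n4 m :: nat
  assumes "n1 = n2" and "m \<ge> n1"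
  shows "(\<forall>GA \<in> carrier_mat (qdim n1 n2 n3 n4 m) (qdim n1 n2 n3 n4 m).
          \<forall>GB \<in> carrier_mat (qdim n1 n2 n3 n4 m) (qdim n1 n2 n3 n4 m).
            rate n1 n2 n3 n4 m GA GB = 0)
       \<and> linear_capacity n1 n2 n3 n4 m = 0"
proof -
  define q where "q = qdim n1 n2 n3 n4 m"
  have rates: "\<forall>GA \<in> carrier_mat q q. \<forall>GB \<in> carrier_mat q q. rate n1 n2 n3 n4 m GA GB = 0"
    using rate_eq_0[OF assms] unfolding q_def by blast
  moreover have "{rate n1 n2 n3 n4 m GA GB | GA GB.
                   GA \<in> carrier_mat q q \<and> GB \<in> carrier_mat q q} = {0}"
    using rates zero_carrier_mat[of q q] by fastforce
  ultimately show ?thesis unfolding linear_capacity_def q_def[symmetric] by simp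
qed

end
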